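(* Let $a\ge b\ge1$ be integers with either $b\ge2$, or $b=1$ and $a\ge5$, and $A=\begin{pmatrix}2&-a\\-b&2\end{pmatrix}$. Then every $\pi$-system $\Sigma\subseteq\Delta_{\mathrm{re}}$ of $\mathfrak g(A)$ with $|\Sigma|>1$ is either of the form $\{\beta_1^j,\beta_2^k\}$ or $\{-\beta_1^j,-\beta_2^k\}$ where $\{\beta_1^j,\beta_2^k\}$ is a $\pi$-system (for $b=1$, $a\ge5$ this means $(j,k)\ne(1,0)$), or of the form $\Sigma=\{\beta_i^j,-\beta_i^k\}$ for some $j,k\in\mathbb Z_+$ and $i\in\{1,2\}$. In particular $|\Sigma|\le2$, and $\Sigma$ is linearly independent unless $\Sigma=\{\alpha,-\alpha\}$ for some $\alpha\in\Delta^+_{\mathrm{re}}$. Conversely, if $b\ge2$, then $\{\beta_i^j,-\beta_i^k\}$ is a $\pi$-system for all $j,k\in\mathbb Z_+$ and $i=1,2$; if $b=1$ and $a\ge5$, then $\{\beta_i^j,-\beta_i^k\}$ is a $\pi$-system if and only if $\{j,k\}\ne\{s,s+2\}$ for every $s\in\mathbb Z_+$ with $s\equiv i\pmod 2$.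
   Context: Let $\mathfrak g(A)$ be the Kac–Moody algebra with simple roots $\alpha_1,\alpha_2$, root system $\Delta$, real roots $\Delta_{\mathrm{re}}$, positive real roots $\Delta^+_{\mathrm{re}}$. $\mathbb Z_+=\{0,1,2,\dots\}$. Define $c_0=d_0=0$, $c_1=d_1=1$, $c_{k+2}+c_k=a d_{k+1}$, $d_{k+2}+d_k=b c_{k+1}$, and $\beta_1^j=c_j\alpha_1+d_{j+1}\alpha_2$, $\beta_2^j=c_{j+1}\alpha_1+d_j\alpha_2$ ($j\in\mathbb Z_+$); then $\Delta^+_{\mathrm{re}}=\{\beta_1^j,\beta_2^j\}$. A subset $\Sigma\subseteq\Delta_{\mathrm{re}}$ is a $\pi$-system if $\alpha-\beta\notin\Delta$ for all $\alpha,\beta\in\Sigma$. *)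

theory Defs
  imports "HOL-Analysis.Analysis"
begin

text \<open>Rank-2 Kac-Moody algebra with Cartan matrix A = [[2,-a],[-b,2]].
  An element x*alpha1 + y*alpha2 of the root lattice Q is the pair (x,y) :: int * int.\<close>

definition rneg :: "int \<times> int \<Rightarrow> int \<times> int" where
  "rneg v = (- fst v, - snd v)"

definition rsub :: "int \<times> int \<Rightarrow> int \<times> int \<Rightarrow> int \<times> int" where
  "rsub v w = (fst v - fst w, snd v - snd w)"

text \<open>Pairings with the simple coroots: a_ij = <alpha_j, alpha_i^vee>.\<close>
definition cop1 :: "int \<Rightarrow> int \<Rightarrow> int \<times> int \<Rightarrow> int" where
  "cop1 a b v = 2 * fst v - a * snd v"

definition cop2 :: "int \<Rightarrow> int \<Rightarrow> int \<times> int \<Rightarrow> int" where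
  "cop2 a b v = - b * fst v + 2 * snd v"

definition refl1 :: "int \<Rightarrow> int \<Rightarrow> int \<times> int \<Rightarrow> int \<times> int" where
  "refl1 a b v = (fst v - cop1 a b v, snd v)"

definition refl2 :: "int \<Rightarrow> int \<Rightarrow> int \<times> int \<Rightarrow> int \<times> int" where
  "refl2 a b v = (fst v, snd v - cop2 a b v)"

inductive_set Worbit :: "int \<Rightarrow> int \<Rightarrow> (int \<times> int) set \<Rightarrow> (int \<times> int) set"
  for a b :: int and S :: "(int \<times> int) set" where
  base: "v \<in> S \<Longrightarrow> v \<in> Worbit a b S"
| step1: "v \<in> Worbit a b S \<Longrightarrow> refl1 a b v \<in> Worbit a b S"
| step2: "v \<in> Worbit a b S \<Longrightarrow> refl2 a b v \<in> Worbit a b S"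

definition real_roots :: "int \<Rightarrow> int \<Rightarrow> (int \<times> int) set" where
  "real_roots a b = Worbit a b {(1,0), (0,1)}"

definition positive_real_roots :: "int \<Rightarrow> int \<Rightarrow> (int \<times> int) set" where
  "positive_real_roots a b = {v \<in> real_roots a b. fst v \<ge> 0 \<and> snd v \<ge> 0}"

text \<open>Kac's fundamental set K: nonzero alpha in Q_+ with connected support
  (automatic in rank 2 with a, b >= 1) and <alpha, alpha_i^vee> <= 0 for i = 1,2.\<close>
definition fund_set :: "int \<Rightarrow> int \<Rightarrow> (int \<times> int) set" where
  "fund_set a b = {v. fst v \<ge> 0 \<and> snd v \<ge> 0 \<and> v \<noteq> (0,0)
                     \<and> cop1 a b v \<le> 0 \<and> cop2 a b v \<le> 0}"

text \<open>Imaginary roots (Kac, Thm 5.4): Delta_im^+ = W K, Delta_im = Delta_im^+ \<union> -Delta_im^+.\<close>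
definition imag_roots :: "int \<Rightarrow> int \<Rightarrow> (int \<times> int) set" where
  "imag_roots a b = Worbit a b (fund_set a b) \<union> rneg ` Worbit a b (fund_set a b)"

definition roots :: "int \<Rightarrow> int \<Rightarrow> (int \<times> int) set" where
  "roots a b = real_roots a b \<union> imag_roots a b"

definition pi_system :: "int \<Rightarrow> int \<Rightarrow> (int \<times> int) set \<Rightarrow> bool" where
  "pi_system a b S \<longleftrightarrow> S \<subseteq> real_roots a b \<and>
     (\<forall>v\<in>S. \<forall>w\<in>S. rsub v w \<notin> roots a b)"

fun cd :: "int \<Rightarrow> int \<Rightarrow> nat \<Rightarrow> int \<times> int" where
  "cd a b 0 = (0, 0)"
| "cd a b (Suc 0) = (1, 1)"
| "cd a b (Suc (Suc k)) =
     (a * snd (cd a b (Suc k)) - fst (cd a b k), b * fst (cd a b (Suc k)) - snd (cd a b k))"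

definition cc :: "int \<Rightarrow> int \<Rightarrow> nat \<Rightarrow> int" where "cc a b k = fst (cd a b k)"
definition dd :: "int \<Rightarrow> int \<Rightarrow> nat \<Rightarrow> int" where "dd a b k = snd (cd a b k)"

definition beta :: "int \<Rightarrow> int \<Rightarrow> nat \<Rightarrow> nat \<Rightarrow> int \<times> int" where
  "beta a b i j = (if i = 1 then (cc a b j, dd a b (j+1)) else (cc a b (j+1), dd a b j))"

text \<open>Linear independence over the reals (equivalently over Q) of a set of lattice vectors.\<close>
definition lin_indep :: "(int \<times> int) set \<Rightarrow> bool" where
  "lin_indep S \<longleftrightarrow>
     independent ((\<lambda>v. (real_of_int (fst v), real_of_int (snd v))) ` S)"

end

theory Submission
  imports Defs
begin

(* The form qform(x alpha_1 + y alpha_2) = b x^2 - a b x y + a y^2 is Weyl-invariant; it equals a or b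
   on real roots and is <= 0 on imaginary roots, while a descent by simple reflections shows that
   every nonzero vector of Q_+ with qform <= 0 is an imaginary root. The real roots are exactly the
   vectors +-beta_i^j, and each simple reflection maps a beta to a beta with shifted index (or to
   the negative of a simple root). Pulling beta_i^j +- beta_l^k back along the Weyl group therefore
   reduces every question "is this a root?" to a case where one summand is a simple root; there the
   growth of c_k and d_k, i.e. the value of qform, decides. The outcome is that beta_1^j + beta_2^k
   and beta_i^j - beta_i^k (j ~= k) are always roots. Hence two elements +-beta_i^j of a pi-system
   differ in exactly one of sign and index i, which is impossible for three elements. *)

section \<open>The Weyl group action on the root lattice\<close>

abbreviation radd :: "int \<times> int \<Rightarrow> int \<times> int \<Rightarrow> int \<times> int" where
  "radd v w \<equiv> rsub v (rneg w)"

lemmas lattice_defs = rneg_def rsub_def refl1_def refl2_def cop1_def cop2_def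

lemma refl1_refl1 [simp]: "refl1 a b (refl1 a b v) = v"
  by (simp add: lattice_defs)

lemma refl2_refl2 [simp]: "refl2 a b (refl2 a b v) = v"
  by (simp add: lattice_defs)

lemma rneg_rneg [simp]: "rneg (rneg v) = v"
  by (simp add: lattice_defs)

lemma refl1_rneg: "refl1 a b (rneg v) = rneg (refl1 a b v)"
  by (simp add: lattice_defs)

lemma refl2_rneg: "refl2 a b (rneg v) = rneg (refl2 a b v)"
  by (simp add: lattice_defs)

lemma rneg_rsub: "rneg (rsub v w) = rsub w v"
  by (simp add: lattice_defs)

lemma radd_commute: "radd v w = radd w v"
  by (simp add: lattice_defs)

lemma rsub_self: "rsub v v = (0, 0)"
  by (simp add: lattice_defs)

lemma Worbit_refl1_iff [simp]: "refl1 a b v \<in> Worbit a b S \<longleftrightarrow> v \<in> Worbit a b S"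
  by (metis Worbit.step1 refl1_refl1)

lemma Worbit_refl2_iff [simp]: "refl2 a b v \<in> Worbit a b S \<longleftrightarrow> v \<in> Worbit a b S"
  by (metis Worbit.step2 refl2_refl2)

lemma rneg_mem_real_roots: "v \<in> real_roots a b \<Longrightarrow> rneg v \<in> real_roots a b"
  unfolding real_roots_def
proof (induction rule: Worbit.induct)
  case (base v)
  then have "rneg v = refl1 a b v \<or> rneg v = refl2 a b v"
    by (auto simp: lattice_defs)
  then show ?case
    using base by (auto intro: Worbit.base)
qed (simp_all add: refl1_rneg [symmetric] refl2_rneg [symmetric])

lemma real_roots_rneg_iff [simp]: "rneg v \<in> real_roots a b \<longleftrightarrow> v \<in> real_roots a b"
  by (metis rneg_mem_real_roots rneg_rneg)

lemma real_roots_refl1_iff [simp]: "refl1 a b v \<in> real_roots a b \<longleftrightarrow> v \<in> real_roots a b"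
  by (simp add: real_roots_def)

lemma real_roots_refl2_iff [simp]: "refl2 a b v \<in> real_roots a b \<longleftrightarrow> v \<in> real_roots a b"
  by (simp add: real_roots_def)

lemma rneg_mem_image_iff: "rneg v \<in> rneg ` A \<longleftrightarrow> v \<in> A"
  by (metis image_iff rneg_rneg)

lemma imag_roots_rneg_iff [simp]: "rneg v \<in> imag_roots a b \<longleftrightarrow> v \<in> imag_roots a b"
  by (metis Un_iff imag_roots_def rneg_mem_image_iff rneg_rneg)

lemma imag_roots_refl1_iff [simp]: "refl1 a b v \<in> imag_roots a b \<longleftrightarrow> v \<in> imag_roots a b"
  by (metis Un_iff Worbit_refl1_iff imag_roots_def refl1_rneg rneg_mem_image_iff rneg_rneg)

lemma imag_roots_refl2_iff [simp]: "refl2 a b v \<in> imag_roots a b \<longleftrightarrow> v \<in> imag_roots a b"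
  by (metis Un_iff Worbit_refl2_iff imag_roots_def refl2_rneg rneg_mem_image_iff rneg_rneg)

lemma roots_rneg_iff [simp]: "rneg v \<in> roots a b \<longleftrightarrow> v \<in> roots a b"
  and roots_refl1_iff [simp]: "refl1 a b v \<in> roots a b \<longleftrightarrow> v \<in> roots a b"
  and roots_refl2_iff [simp]: "refl2 a b v \<in> roots a b \<longleftrightarrow> v \<in> roots a b"
  by (simp_all add: roots_def)

lemma roots_iff_if_refl1_eq: "refl1 a b v = w \<Longrightarrow> v \<in> roots a b \<longleftrightarrow> w \<in> roots a b"
  by auto

lemma roots_iff_if_refl2_eq: "refl2 a b v = w \<Longrightarrow> v \<in> roots a b \<longleftrightarrow> w \<in> roots a b"
  by auto

lemma roots_iff_if_refl2_refl1_eq: "refl2 a b (refl1 a b v) = w \<Longrightarrow> v \<in> roots a b \<longleftrightarrow> w \<in> roots a b"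
  by auto

section \<open>The invariant quadratic form\<close>

(* Half of the Weyl-invariant quadratic form v^T D A v, where D = diag(b, a) symmetrises the
   Cartan matrix A; thus qform alpha_1 = b and qform alpha_2 = a. *)
definition qform :: "int \<Rightarrow> int \<Rightarrow> int \<times> int \<Rightarrow> int" where
  "qform a b v = b * (fst v)\<^sup>2 - a * b * fst v * snd v + a * (snd v)\<^sup>2"

lemma qform_swap: "qform a b (x, y) = qform b a (y, x)"
  by (simp add: qform_def algebra_simps)

lemma qform_refl1 [simp]: "qform a b (refl1 a b v) = qform a b v"
  and qform_refl2 [simp]: "qform a b (refl2 a b v) = qform a b v"
  and qform_rneg [simp]: "qform a b (rneg v) = qform a b v"
  by (simp_all add: qform_def lattice_defs power2_eq_square algebra_simps)

lemma qform_real_root: "v \<in> real_roots a b \<Longrightarrow> qform a b v = a \<or> qform a b v = b"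
  unfolding real_roots_def
proof (induction rule: Worbit.induct)
  case (base v)
  then show ?case
    by (auto simp: qform_def)
qed simp_all

lemma coprime_mult_diff_left_iff:
  fixes x y c :: "'a::ring_gcd"
  shows "coprime (c * y - x) y \<longleftrightarrow> coprime x y"
proof -
  have "gcd y (c * y + - x) = gcd y (- x)"
    by (rule gcd_add_mult)
  then show ?thesis
    by (simp add: coprime_iff_gcd_eq_1 gcd.commute)
qed

lemma coprime_real_root: "v \<in> real_roots a b \<Longrightarrow> coprime (fst v) (snd v)"
  unfolding real_roots_def
  by (induction rule: Worbit.induct)
    (auto simp: lattice_defs coprime_mult_diff_left_iff coprime_commute [of "fst _"])

lemma qform_imag_root_nonpos:
  assumes "0 \<le> a" "0 \<le> b" "v \<in> imag_roots a b"
  shows "qform a b v \<le> 0"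
proof -
  have "qform a b w \<le> 0" if "w \<in> Worbit a b (fund_set a b)" for w
    using that
  proof (induction rule: Worbit.induct)
    case (base v)
    obtain x y where v: "v = (x, y)"
      by force
    have "0 \<le> x" "0 \<le> y" "2 * x - a * y \<le> 0" "2 * y - b * x \<le> 0"
      using base by (auto simp: v fund_set_def cop1_def cop2_def)
    then have "b * x * (2 * x - a * y) + a * y * (2 * y - b * x) \<le> 0"
      using assms(1,2) by (simp add: add_nonpos_nonpos mult_nonneg_nonpos)
    moreover have "2 * qform a b v = b * x * (2 * x - a * y) + a * y * (2 * y - b * x)"
      by (simp add: v qform_def power2_eq_square algebra_simps)
    ultimately show ?case
      by linarith
  qed simp_all
  moreover obtain w where "w \<in> Worbit a b (fund_set a b)" "v = w \<or> v = rneg w"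
    using assms(3) unfolding imag_roots_def by blast
  ultimately show ?thesis
    by (metis qform_rneg)
qed

lemma qform_gt_imp_not_root:
  assumes "0 \<le> b" "b \<le> a" "a < qform a b v"
  shows "v \<notin> roots a b"
  using assms qform_real_root [of v a b] qform_imag_root_nonpos [of a b v]
  by (auto simp: roots_def)

lemma zero_in_Worbit_iff: "(0, 0) \<in> Worbit a b S \<longleftrightarrow> (0, 0) \<in> S"
proof
  have "v \<in> Worbit a b S \<Longrightarrow> v = (0, 0) \<Longrightarrow> (0, 0) \<in> S" for v
    by (induction rule: Worbit.induct) (auto simp: lattice_defs)
  then show "(0, 0) \<in> Worbit a b S \<Longrightarrow> (0, 0) \<in> S"
    by blast
qed (rule Worbit.base)

lemma zero_not_in_roots:
  assumes "1 \<le> a" "1 \<le> b"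
  shows "(0, 0) \<notin> roots a b"
proof -
  have "(0, 0) \<notin> real_roots a b"
    using qform_real_root [of "(0, 0)" a b] assms by (auto simp: qform_def)
  moreover have "(0, 0) \<notin> Worbit a b (fund_set a b)"
    by (simp add: zero_in_Worbit_iff fund_set_def)
  moreover have "rneg (0, 0) = (0, 0)"
    by (simp add: rneg_def)
  ultimately show ?thesis
    using rneg_mem_image_iff [of "(0, 0)" "Worbit a b (fund_set a b)"]
    by (simp add: roots_def imag_roots_def)
qed

lemma refl1_descent:
  assumes "1 \<le> a" "1 \<le> b" "0 \<le> x" "0 \<le> y" "(x, y) \<noteq> (0, 0)"
    and "qform a b (x, y) \<le> 0" "0 < 2 * x - a * y"
  shows "0 \<le> a * y - x" "0 < y"
proof -
  have Q: "qform a b (x, y) = b * x * (x - a * y) + a * y\<^sup>2"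
    by (simp add: qform_def power2_eq_square algebra_simps)
  show "0 \<le> a * y - x"
  proof (rule ccontr)
    assume "\<not> 0 \<le> a * y - x"
    moreover have "0 \<le> a * y"
      using assms(1,4) by simp
    ultimately have "0 < x" "0 < x - a * y"
      by simp_all
    then have "0 < b * x * (x - a * y)"
      using assms(2) by simp
    then show False
      using Q assms(1,6) by (smt (verit) zero_le_power2 mult_nonneg_nonneg)
  qed
  show "0 < y"
  proof (rule ccontr)
    assume "\<not> 0 < y"
    then have "y = 0" "0 < x"
      using assms(3,4,5) by auto
    moreover from this have "0 < b * x * x"
      using assms(2) by simp
    ultimately show False
      using Q assms(6) by (simp add: power2_eq_square)
  qed
qed

lemma refl2_descent:
  assumes "1 \<le> a" "1 \<le> b" "0 \<le> x" "0 \<le> y" "(x, y) \<noteq> (0, 0)"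
    and "qform a b (x, y) \<le> 0" "0 < 2 * y - b * x"
  shows "0 \<le> b * x - y" "0 < x"
  using refl1_descent [of b a y x] assms by (auto simp: qform_swap)

lemma Worbit_fund_set_if_qform_nonpos:
  assumes "1 \<le> a" "1 \<le> b"
  shows "0 \<le> fst v \<Longrightarrow> 0 \<le> snd v \<Longrightarrow> v \<noteq> (0, 0) \<Longrightarrow> qform a b v \<le> 0
    \<Longrightarrow> v \<in> Worbit a b (fund_set a b)"
proof (induction "nat (fst v + snd v)" arbitrary: v rule: less_induct)
  case less
  obtain x y where v: "v = (x, y)"
    by force
  consider "0 < 2 * x - a * y" | "0 < 2 * y - b * x" | "2 * x - a * y \<le> 0" "2 * y - b * x \<le> 0"
    by linarith
  then show ?case
  proof cases
    case 1
    then have "0 \<le> a * y - x" "0 < y"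
      using refl1_descent [of a b x y] assms less.prems by (simp_all add: v)
    moreover have "qform a b (refl1 a b v) \<le> 0"
      using less.prems by simp
    ultimately have "refl1 a b v \<in> Worbit a b (fund_set a b)"
      using 1 less.prems by (intro less.hyps) (auto simp: v lattice_defs)
    then show ?thesis
      by simp
  next
    case 2
    then have "0 \<le> b * x - y" "0 < x"
      using refl2_descent [of a b x y] assms less.prems by (simp_all add: v)
    moreover have "qform a b (refl2 a b v) \<le> 0"
      using less.prems by simp
    ultimately have "refl2 a b v \<in> Worbit a b (fund_set a b)"
      using 2 less.prems by (intro less.hyps) (auto simp: v lattice_defs)
    then show ?thesis
      by simp
  next
    case 3
    then show ?thesis
      using less.prems by (intro Worbit.base) (auto simp: v fund_set_def cop1_def cop2_def)
  qed
qed

lemma root_if_qform_nonpos: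
  assumes "1 \<le> a" "1 \<le> b" "0 \<le> fst v" "0 \<le> snd v" "v \<noteq> (0, 0)" "qform a b v \<le> 0"
  shows "v \<in> roots a b"
  using Worbit_fund_set_if_qform_nonpos [OF assms] by (simp add: roots_def imag_roots_def)

section \<open>Real roots as signed betas\<close>

lemma cc_simps [simp]:
  "cc a b 0 = 0" "cc a b (Suc 0) = 1" "cc a b (Suc (Suc k)) = a * dd a b (Suc k) - cc a b k"
  and dd_simps [simp]:
  "dd a b 0 = 0" "dd a b (Suc 0) = 1" "dd a b (Suc (Suc k)) = b * cc a b (Suc k) - dd a b k"
  by (simp_all add: cc_def dd_def)

lemmas beta_lattice_defs = beta_def lattice_defs

lemma refl1_beta_1: "refl1 a b (beta a b 1 j) = beta a b 2 (Suc j)"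
  and refl2_beta_2: "refl2 a b (beta a b 2 j) = beta a b 1 (Suc j)"
  by (simp_all add: beta_def lattice_defs)

lemma beta_real_root: "i \<in> {1, 2} \<Longrightarrow> beta a b i j \<in> real_roots a b"
proof -
  have "beta a b 1 j \<in> real_roots a b \<and> beta a b 2 j \<in> real_roots a b"
  proof (induction j)
    case 0
    have "beta a b 1 0 = (0, 1)" "beta a b 2 0 = (1, 0)"
      by (simp_all add: beta_def)
    then show ?case
      by (simp add: real_roots_def Worbit.base)
  next
    case (Suc j)
    then show ?case
      by (metis real_roots_refl1_iff real_roots_refl2_iff refl1_beta_1 refl2_beta_2)
  qed
  then show "i \<in> {1, 2} \<Longrightarrow> beta a b i j \<in> real_roots a b"
    by auto
qed

definition signed :: "bool \<Rightarrow> int \<times> int \<Rightarrow> int \<times> int" where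
  "signed e v = (if e then v else rneg v)"

lemma signed_signed: "signed e (signed f v) = signed (e = f) v"
  by (simp add: signed_def)

lemma refl1_signed: "refl1 a b (signed e v) = signed e (refl1 a b v)"
  and refl2_signed: "refl2 a b (signed e v) = signed e (refl2 a b v)"
  by (simp_all add: signed_def refl1_rneg refl2_rneg)

lemma roots_signed_iff [simp]: "signed e v \<in> roots a b \<longleftrightarrow> v \<in> roots a b"
  by (simp add: signed_def)

lemma rsub_signed:
  "rsub (signed e v) (signed f w) = signed e (if e = f then rsub v w else radd v w)"
  by (simp add: signed_def lattice_defs)

lemma refl1_beta_signed_beta:
  assumes "i \<in> {1, 2}"
  shows "\<exists>f l k. l \<in> {1, 2} \<and> refl1 a b (beta a b i j) = signed f (beta a b l k)"
proof -
  consider "i = 1" | "i = 2" "j = 0" | m where "i = 2" "j = Suc m"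
    using assms by (cases j) auto
  then show ?thesis
  proof cases
    case 1
    then have "refl1 a b (beta a b i j) = signed True (beta a b 2 (Suc j))"
      by (simp add: signed_def beta_def lattice_defs)
    then show ?thesis
      by blast
  next
    case 2
    then have "refl1 a b (beta a b i j) = signed False (beta a b 2 0)"
      by (simp add: signed_def beta_def lattice_defs)
    then show ?thesis
      by blast
  next
    case 3
    then have "refl1 a b (beta a b i j) = signed True (beta a b 1 m)"
      by (simp add: signed_def beta_def lattice_defs)
    then show ?thesis
      by blast
  qed
qed

lemma refl2_beta_signed_beta:
  assumes "i \<in> {1, 2}"
  shows "\<exists>f l k. l \<in> {1, 2} \<and> refl2 a b (beta a b i j) = signed f (beta a b l k)"
proof -
  consider "i = 2" | "i = 1" "j = 0" | m where "i = 1" "j = Suc m"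
    using assms by (cases j) auto
  then show ?thesis
  proof cases
    case 1
    then have "refl2 a b (beta a b i j) = signed True (beta a b 1 (Suc j))"
      by (simp add: signed_def beta_def lattice_defs)
    then show ?thesis
      by blast
  next
    case 2
    then have "refl2 a b (beta a b i j) = signed False (beta a b 1 0)"
      by (simp add: signed_def beta_def lattice_defs)
    then show ?thesis
      by blast
  next
    case 3
    then have "refl2 a b (beta a b i j) = signed True (beta a b 2 m)"
      by (simp add: signed_def beta_def lattice_defs)
    then show ?thesis
      by blast
  qed
qed

lemma real_root_signed_beta:
  "v \<in> real_roots a b \<Longrightarrow> \<exists>e i j. i \<in> {1, 2} \<and> v = signed e (beta a b i j)"
  unfolding real_roots_def
proof (induction rule: Worbit.induct)
  case (base v)
  have "(0, 1) = signed True (beta a b 1 0)" "(1, 0) = signed True (beta a b 2 0)"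
    by (simp_all add: signed_def beta_def)
  then show ?case
    using base by blast
next
  case (step1 v)
  then obtain e i j where "i \<in> {1, 2}" "v = signed e (beta a b i j)"
    by blast
  moreover obtain f l k where "l \<in> {1, 2}" "refl1 a b (beta a b i j) = signed f (beta a b l k)"
    using refl1_beta_signed_beta [OF \<open>i \<in> {1, 2}\<close>] by blast
  ultimately show ?case
    by (metis refl1_signed signed_signed)
next
  case (step2 v)
  then obtain e i j where "i \<in> {1, 2}" "v = signed e (beta a b i j)"
    by blast
  moreover obtain f l k where "l \<in> {1, 2}" "refl2 a b (beta a b i j) = signed f (beta a b l k)"
    using refl2_beta_signed_beta [OF \<open>i \<in> {1, 2}\<close>] by blast
  ultimately show ?case
    by (metis refl2_signed signed_signed)
qed

section \<open>Pi-systems of real roots\<close>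

definition exceptional_pair :: "nat \<Rightarrow> nat \<Rightarrow> nat \<Rightarrow> bool" where
  "exceptional_pair i j k \<longleftrightarrow> (k = j + 2 \<or> j = k + 2) \<and> (even (min j k) \<longleftrightarrow> even i)"

lemma exceptional_pair_iff:
  "exceptional_pair i j k \<longleftrightarrow> (\<exists>s. {j, k} = {s, s + 2} \<and> s mod 2 = i mod 2)"
proof -
  have parity: "s mod 2 = i mod 2 \<longleftrightarrow> (even s \<longleftrightarrow> even i)" for s :: nat
    by (cases "even s"; cases "even i") (simp_all add: even_iff_mod_2_eq_zero odd_iff_mod_2_eq_one)
  have "exceptional_pair i j k \<longleftrightarrow>
      (\<exists>s. ((j = s \<and> k = s + 2) \<or> (j = s + 2 \<and> k = s)) \<and> (even s \<longleftrightarrow> even i))"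
    unfolding exceptional_pair_def by (rule iffI) (auto simp: min_def)
  then show ?thesis
    by (simp add: doubleton_eq_iff parity)
qed

lemma pi_system_pair_iff:
  assumes "(0, 0) \<notin> roots a b"
  shows "pi_system a b {v, w} \<longleftrightarrow>
    v \<in> real_roots a b \<and> w \<in> real_roots a b \<and> rsub v w \<notin> roots a b"
proof -
  have "rsub w v \<in> roots a b \<longleftrightarrow> rsub v w \<in> roots a b"
    by (metis rneg_rsub roots_rneg_iff)
  then show ?thesis
    using assms by (auto simp: pi_system_def rsub_self)
qed

lemma pi_system_signed_image_iff: "pi_system a b (signed e ` S) \<longleftrightarrow> pi_system a b S"
proof -
  have "rsub (signed e v) (signed e w) \<in> roots a b \<longleftrightarrow> rsub v w \<in> roots a b" for v w
    by (simp add: rsub_signed)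
  moreover have "signed e v \<in> real_roots a b \<longleftrightarrow> v \<in> real_roots a b" for v
    by (simp add: signed_def)
  ultimately show ?thesis
    unfolding pi_system_def by blast
qed

lemma independent_pair_if_det_nonzero:
  fixes x1 y1 x2 y2 :: real
  assumes "x1 * y2 \<noteq> x2 * y1"
  shows "independent {(x1, y1), (x2, y2)}"
proof -
  have "(x2, y2) \<noteq> 0" "(x1, y1) \<noteq> (x2, y2)"
    using assms by (auto simp: zero_prod_def)
  moreover have "(x1, y1) \<notin> span {(x2, y2)}"
  proof
    assume "(x1, y1) \<in> span {(x2, y2)}"
    then obtain c where "x1 = c * x2" "y1 = c * y2"
      by (auto simp: span_singleton)
    then show False
      using assms by simp
  qed
  ultimately show ?thesis
    by (simp add: independent_insert)
qed

lemma coprime_cross_mult_dvd: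
  fixes x1 y1 x2 y2 :: "'a::semiring_gcd"
  assumes "coprime x1 y1" "x1 * y2 = x2 * y1"
  shows "x1 dvd x2" "y1 dvd y2"
proof -
  have "x1 dvd x2 * y1" "y1 dvd x1 * y2"
    by (simp_all flip: assms(2)) (simp add: assms(2))
  then show "x1 dvd x2" "y1 dvd y2"
    using assms(1) coprime_commute [of x1 y1]
    by (simp_all add: coprime_dvd_mult_left_iff coprime_dvd_mult_right_iff)
qed

lemma coprime_parallel_eq_or_neg:
  fixes x1 y1 x2 y2 :: int
  assumes "coprime x1 y1" "coprime x2 y2" "x1 * y2 = x2 * y1"
  shows "(x2, y2) = (x1, y1) \<or> (x2, y2) = (- x1, - y1)"
proof -
  note dvd12 = coprime_cross_mult_dvd [OF assms(1,3)]
  note dvd21 = coprime_cross_mult_dvd [OF assms(2) assms(3) [symmetric]]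
  have "\<bar>x2\<bar> = \<bar>x1\<bar>" "\<bar>y2\<bar> = \<bar>y1\<bar>"
    using zdvd_antisym_abs dvd12 dvd21 by blast+
  then show ?thesis
    using assms by (auto simp: abs_eq_iff)
qed

lemma lin_indep_singleton: "v \<noteq> (0, 0) \<Longrightarrow> lin_indep {v}"
  by (cases v) (simp add: lin_indep_def independent_insert zero_prod_def)

lemma lin_indep_real_root_pair:
  assumes "v \<in> real_roots a b" "w \<in> real_roots a b" "w \<noteq> v" "w \<noteq> rneg v"
  shows "lin_indep {v, w}"
proof -
  obtain x1 y1 x2 y2 where v: "v = (x1, y1)" and w: "w = (x2, y2)"
    by force
  have "coprime x1 y1" "coprime x2 y2"
    using coprime_real_root assms(1,2) v w by fastforce+
  then have "x1 * y2 \<noteq> x2 * y1"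
    using coprime_parallel_eq_or_neg assms(3,4) v w by (auto simp: rneg_def)
  then have "real_of_int x1 * real_of_int y2 \<noteq> real_of_int x2 * real_of_int y1"
    by (metis of_int_eq_iff of_int_mult)
  then show ?thesis
    unfolding lin_indep_def v w by (simp add: independent_pair_if_det_nonzero)
qed

section \<open>Growth of the sequences c_k and d_k\<close>

lemma coupled_recurrence_bounds:
  fixes a b :: "'a::linordered_idom" and X Y :: "nat \<Rightarrow> 'a"
  assumes "4 \<le> a * b" "0 < a" "0 < b"
    and X_rec: "\<And>n. X (Suc (Suc n)) = a * Y (Suc n) - X n"
    and Y_rec: "\<And>n. Y (Suc (Suc n)) = b * X (Suc n) - Y n"
    and "2 * X 0 \<le> a * Y 1" "0 \<le> X 0" "2 * Y 0 \<le> b * X 1" "0 \<le> Y 0"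
  shows "2 * X n \<le> a * Y (Suc n) \<and> 0 \<le> X n \<and> 2 * Y n \<le> b * X (Suc n) \<and> 0 \<le> Y n"
proof (induction n)
  case (Suc n)
  then have XY: "2 * X n \<le> a * Y (Suc n)" "0 \<le> X n" "2 * Y n \<le> b * X (Suc n)" "0 \<le> Y n"
    by auto
  have "0 \<le> b * X (Suc n)" "0 \<le> a * Y (Suc n)"
    using XY by linarith+
  then have "0 \<le> X (Suc n)" "0 \<le> Y (Suc n)"
    using assms(2,3) by (simp_all add: zero_le_mult_iff)
  then have "4 * X (Suc n) \<le> a * b * X (Suc n)" "4 * Y (Suc n) \<le> a * b * Y (Suc n)"
    using assms(1) by (simp_all add: mult_right_mono)
  moreover have "2 * a * Y n \<le> a * b * X (Suc n)" "2 * b * X n \<le> a * b * Y (Suc n)"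
    using XY assms(2,3) by (simp_all add: mult.assoc)
  ultimately show ?case
    using \<open>0 \<le> X (Suc n)\<close> \<open>0 \<le> Y (Suc n)\<close>
    by (simp add: X_rec Y_rec algebra_simps)
qed (use assms in simp)

lemma min_le_if_step2_mono:
  fixes X :: "nat \<Rightarrow> 'a::linorder"
  assumes mono: "\<And>n. X n \<le> X (Suc (Suc n))"
  shows "m \<le> n \<Longrightarrow> min (X m) (X (Suc m)) \<le> X n"
proof (induction n rule: less_induct)
  case (less n)
  show ?case
  proof (cases "n \<le> Suc m")
    case True
    with less.prems have "n = m \<or> n = Suc m"
      by auto
    then show ?thesis
      by auto
  next
    case False
    then obtain k where "n = Suc (Suc k)" "m \<le> k"
      by (metis Suc_le_D not_less_eq_eq)
    then show ?thesis
      using less.IH [of k] mono [of k] by simp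
  qed
qed

(* Since 2 c_(n+2) - a d_(n+1) = c_(n+2) - c_n, these gaps measure how qform changes when a simple
   root is added to a beta; they satisfy the recurrence of (c_n, d_n) again. *)
definition cc_gap :: "int \<Rightarrow> int \<Rightarrow> nat \<Rightarrow> int" where
  "cc_gap a b n = cc a b (Suc (Suc n)) - cc a b n"

definition dd_gap :: "int \<Rightarrow> int \<Rightarrow> nat \<Rightarrow> int" where
  "dd_gap a b n = dd a b (Suc (Suc n)) - dd a b n"

lemma gap_rec:
  "cc_gap a b (Suc (Suc n)) = a * dd_gap a b (Suc n) - cc_gap a b n"
  "dd_gap a b (Suc (Suc n)) = b * cc_gap a b (Suc n) - dd_gap a b n"
  by (simp_all add: cc_gap_def dd_gap_def algebra_simps)

(* index 1 is written Suc 0, its simp normal form *)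
lemma gap_values:
  "cc_gap a b 0 = a" "cc_gap a b (Suc 0) = a * b - 2" "cc_gap a b 2 = a * a * b - 3 * a"
  "cc_gap a b 3 = a * a * b * b - 4 * a * b + 2"
  "dd_gap a b 0 = b" "dd_gap a b (Suc 0) = a * b - 2" "dd_gap a b 2 = a * b * b - 3 * b"
  by (simp_all add: cc_gap_def dd_gap_def numeral_eq_Suc algebra_simps)

locale rank2_km =
  fixes a b :: int
  assumes b_le_a: "b \<le> a" and b_ge_1: "1 \<le> b"
    and a_ge_5_if_b_eq_1: "2 \<le> b \<or> (b = 1 \<and> 5 \<le> a)"
begin

lemma a_gt_0: "0 < a"
  using b_le_a b_ge_1 by simp

lemma ab_ge_4: "4 \<le> a * b"
proof (cases "2 \<le> b")
  case True
  then have "2 * 2 \<le> a * b"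
    using b_le_a by (intro mult_mono) auto
  then show ?thesis
    by simp
qed (use a_ge_5_if_b_eq_1 in auto)

lemma cd_bounds:
  "2 * cc a b n \<le> a * dd a b (Suc n) \<and> 0 \<le> cc a b n \<and> 2 * dd a b n \<le> b * cc a b (Suc n)
    \<and> 0 \<le> dd a b n"
  using ab_ge_4 a_gt_0 b_ge_1 by (intro coupled_recurrence_bounds) simp_all

lemma beta_nonneg: "0 \<le> fst (beta a b i j) \<and> 0 \<le> snd (beta a b i j)"
proof -
  have "0 \<le> cc a b n \<and> 0 \<le> dd a b n" for n
    using cd_bounds by blast
  then show ?thesis
    by (simp add: beta_def)
qed

lemma qform_beta_bounds:
  "i \<in> {1, 2} \<Longrightarrow> b \<le> qform a b (beta a b i j) \<and> qform a b (beta a b i j) \<le> a"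
  using qform_real_root [OF beta_real_root, of i a b j] b_le_a by auto

lemma gap_bounds:
  "2 * cc_gap a b n \<le> a * dd_gap a b (Suc n) \<and> 0 \<le> cc_gap a b n
    \<and> 2 * dd_gap a b n \<le> b * cc_gap a b (Suc n) \<and> 0 \<le> dd_gap a b n"
proof (rule coupled_recurrence_bounds [OF ab_ge_4 a_gt_0])
  have "0 \<le> a * (a * b - 4)" "0 \<le> b * (a * b - 4)"
    using ab_ge_4 a_gt_0 b_ge_1 by simp_all
  then show "2 * cc_gap a b 0 \<le> a * dd_gap a b 1" "2 * dd_gap a b 0 \<le> b * cc_gap a b 1"
    by (simp_all add: gap_values algebra_simps)
qed (use gap_rec gap_values a_gt_0 b_ge_1 in simp_all)

lemma cc_gap_lower_bound:
  assumes "2 \<le> b \<or> 2 \<le> n"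
  shows "a + b \<le> b * cc_gap a b n"
proof -
  have mono: "b * cc_gap a b n \<le> b * cc_gap a b (Suc (Suc n))" for n
    using gap_bounds [of n] gap_rec(1) [of a b n] b_ge_1 by simp
  show ?thesis
  proof (cases "2 \<le> b")
    case True
    have "1 * 1 \<le> (a - 1) * (b - 1)"
      using True b_le_a by (intro mult_mono) simp_all
    moreover have "a * b * 2 \<le> a * b * b"
      using True a_gt_0 b_ge_1 by (intro mult_left_mono) simp_all
    ultimately have "a + b \<le> b * cc_gap a b 0" "a + b \<le> b * cc_gap a b (Suc 0)"
      using b_le_a by (simp_all add: gap_values algebra_simps)
    then show ?thesis
      using min_le_if_step2_mono [of "\<lambda>n. b * cc_gap a b n", OF mono, of 0 n] by simp
  next
    case False
    then have "b = 1" "5 \<le> a" "2 \<le> n"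
      using assms a_ge_5_if_b_eq_1 by auto
    have "b * cc_gap a b 2 = a * a - 3 * a" "b * cc_gap a b 3 = a * a - 4 * a + 2"
      using \<open>b = 1\<close> by (simp_all add: gap_values)
    moreover have "5 * a \<le> a * a"
      using \<open>5 \<le> a\<close> by simp
    ultimately have "a + b \<le> b * cc_gap a b 2" "a + b \<le> b * cc_gap a b 3"
      using \<open>b = 1\<close> \<open>5 \<le> a\<close> by linarith+
    then show ?thesis
      using min_le_if_step2_mono [of "\<lambda>n. b * cc_gap a b n", OF mono, of 2 n] \<open>2 \<le> n\<close>
      by (simp add: numeral_eq_Suc)
  qed
qed

lemma dd_gap_lower_bound:
  assumes "2 \<le> b \<or> 1 \<le> n"
  shows "2 \<le> dd_gap a b n"
proof -
  have mono: "dd_gap a b n \<le> dd_gap a b (Suc (Suc n))" for n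
    using gap_bounds [of n] gap_rec(2) [of a b n] by simp
  show ?thesis
  proof (cases "2 \<le> b")
    case True
    then show ?thesis
      using min_le_if_step2_mono [of "dd_gap a b", OF mono, of 0 n] ab_ge_4 by (simp add: gap_values)
  next
    case False
    then have "b = 1" "5 \<le> a" "1 \<le> n"
      using assms a_ge_5_if_b_eq_1 by auto
    then show ?thesis
      using min_le_if_step2_mono [of "dd_gap a b", OF mono, of 1 n, unfolded Suc_1]
      by (simp add: gap_values)
  qed
qed

section \<open>Sums and differences of betas\<close>

lemma radd_beta_1_0_beta_1_not_root: "radd (beta a b 1 0) (beta a b 1 n) \<notin> roots a b"
proof -
  have v: "radd (beta a b 1 0) (beta a b 1 n) = (cc a b n, dd a b (Suc n) + 1)"
    by (simp add: beta_lattice_defs)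
  have Q: "qform a b (cc a b n, dd a b (Suc n) + 1)
      = qform a b (beta a b 1 n) + a + a * (2 * dd a b (Suc n) - b * cc a b n)"
    by (simp add: qform_def beta_def power2_eq_square algebra_simps)
  have "0 \<le> 2 * dd a b (Suc n) - b * cc a b n"
    using cd_bounds [of "n - 1"] by (cases n) simp_all
  then have "0 \<le> a * (2 * dd a b (Suc n) - b * cc a b n)"
    using a_gt_0 by simp
  then have "a < qform a b (cc a b n, dd a b (Suc n) + 1)"
    using Q qform_beta_bounds [of 1 n] b_ge_1 by simp
  then show ?thesis
    unfolding v using qform_gt_imp_not_root b_ge_1 b_le_a by simp
qed

lemma radd_beta_2_0_beta_2_root_iff:
  "radd (beta a b 2 0) (beta a b 2 n) \<in> roots a b \<longleftrightarrow> b = 1 \<and> n = 2"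
proof (cases n)
  case 0
  have "radd (beta a b 2 0) (beta a b 2 0) = (2, 0)"
    by (simp add: beta_lattice_defs)
  moreover have "(2, 0) \<notin> real_roots a b"
    using coprime_real_root by fastforce
  moreover have "(2, 0) \<notin> imag_roots a b"
    using qform_imag_root_nonpos [of a b "(2, 0)"] a_gt_0 b_ge_1 by (auto simp: qform_def)
  ultimately show ?thesis
    using 0 by (simp add: roots_def)
next
  case (Suc m)
  have v: "radd (beta a b 2 0) (beta a b 2 n) = (cc a b (Suc (Suc m)) + 1, dd a b (Suc m))"
    by (simp add: Suc beta_lattice_defs)
  have Q: "qform a b (cc a b (Suc (Suc m)) + 1, dd a b (Suc m))
      = qform a b (beta a b 2 (Suc m)) + b + b * cc_gap a b m"
    by (simp add: qform_def beta_def cc_gap_def power2_eq_square algebra_simps)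
  show ?thesis
  proof (cases "b = 1 \<and> m = 1")
    case True
    then have "(cc a b (Suc (Suc m)) + 1, dd a b (Suc m)) = refl1 a b (0, 1)"
      by (simp add: lattice_defs)
    moreover have "(0, 1) \<in> roots a b"
      by (simp add: roots_def real_roots_def Worbit.base)
    ultimately show ?thesis
      using True Suc v by simp
  next
    case False
    then consider "m = 0" | "2 \<le> b \<or> 2 \<le> m"
      using b_ge_1 by linarith
    then have "a \<le> b * cc_gap a b m"
    proof cases
      case 1
      then show ?thesis
        using a_gt_0 b_ge_1 by (simp add: gap_values)
    next
      case 2
      then show ?thesis
        using cc_gap_lower_bound [OF 2] b_ge_1 by linarith
    qed
    then have "a < qform a b (cc a b (Suc (Suc m)) + 1, dd a b (Suc m))"
      using Q qform_beta_bounds [of 2 "Suc m"] b_ge_1 by simp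
    then show ?thesis
      unfolding v using False Suc qform_gt_imp_not_root b_ge_1 b_le_a by auto
  qed
qed

lemma radd_beta_1_beta_2_0_root: "radd (beta a b 1 n) (beta a b 2 0) \<in> roots a b"
proof -
  have v: "radd (beta a b 1 n) (beta a b 2 0) = (cc a b n + 1, dd a b (Suc n))"
    by (simp add: beta_lattice_defs)
  have Q: "qform a b (cc a b n + 1, dd a b (Suc n)) = qform a b (beta a b 1 n) + b - b * cc_gap a b n"
    by (simp add: qform_def beta_def cc_gap_def power2_eq_square algebra_simps)
  consider "b = 1" "n = 0" | "b = 1" "n = 1" | "2 \<le> b \<or> 2 \<le> n"
    using b_ge_1 by linarith
  then show ?thesis
  proof cases
    case 1
    then have "(cc a b n + 1, dd a b (Suc n)) = refl2 a b (1, 0)"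
      by (simp add: lattice_defs)
    then show ?thesis
      unfolding v by (simp add: roots_def real_roots_def Worbit.base)
  next
    case 2
    then have "qform a b (cc a b n + 1, dd a b (Suc n)) = 4 - a"
      unfolding Q by (simp add: beta_def gap_values qform_def)
    then show ?thesis
      unfolding v using 2 a_ge_5_if_b_eq_1 by (intro root_if_qform_nonpos) simp_all
  next
    case 3
    moreover have "qform a b (beta a b 1 n) \<le> a"
      using qform_beta_bounds [of 1 n] by simp
    ultimately have "qform a b (cc a b n + 1, dd a b (Suc n)) \<le> 0"
      using Q cc_gap_lower_bound [OF 3] by linarith
    then show ?thesis
      unfolding v using cd_bounds [of n] cd_bounds [of "Suc n"] a_gt_0 b_ge_1
      by (intro root_if_qform_nonpos) simp_all
  qed
qed

lemma radd_beta_1_0_beta_2_root: "radd (beta a b 1 0) (beta a b 2 n) \<in> roots a b"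
proof -
  have v: "radd (beta a b 1 0) (beta a b 2 n) = (cc a b (Suc n), dd a b n + 1)"
    by (simp add: beta_lattice_defs)
  have Q: "qform a b (cc a b (Suc n), dd a b n + 1) = qform a b (beta a b 2 n) + a - a * dd_gap a b n"
    by (simp add: qform_def beta_def dd_gap_def power2_eq_square algebra_simps)
  show ?thesis
  proof (cases "b = 1 \<and> n = 0")
    case True
    then have "(cc a b (Suc n), dd a b n + 1) = refl2 a b (1, 0)"
      by (simp add: lattice_defs)
    then show ?thesis
      unfolding v by (simp add: roots_def real_roots_def Worbit.base)
  next
    case False
    then have "2 \<le> dd_gap a b n"
      using b_ge_1 by (intro dd_gap_lower_bound) auto
    then have "a * 2 \<le> a * dd_gap a b n"
      using a_gt_0 by simp
    then have "qform a b (cc a b (Suc n), dd a b n + 1) \<le> 0"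
      using Q qform_beta_bounds [of 2 n] by simp
    then show ?thesis
      unfolding v using cd_bounds [of n] cd_bounds [of "Suc n"] a_gt_0 b_ge_1
      by (intro root_if_qform_nonpos) simp_all
  qed
qed

lemma radd_beta_1_beta_2_root: "radd (beta a b 1 j) (beta a b 2 k) \<in> roots a b"
proof (induction k arbitrary: j rule: induct_nat_012)
  case 0
  show ?case
    by (rule radd_beta_1_beta_2_0_root)
next
  case 1
  have "radd (beta a b 1 j) (beta a b 2 (Suc 0)) \<in> roots a b
      \<longleftrightarrow> radd (beta a b 1 0) (beta a b 2 (Suc j)) \<in> roots a b"
    by (rule roots_iff_if_refl1_eq) (simp add: beta_lattice_defs algebra_simps)
  then show ?case
    using radd_beta_1_0_beta_2_root by simp
next
  case (ge2 k)
  have "radd (beta a b 1 j) (beta a b 2 (Suc (Suc k))) \<in> roots a b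
      \<longleftrightarrow> radd (beta a b 1 (Suc (Suc j))) (beta a b 2 k) \<in> roots a b"
    by (rule roots_iff_if_refl2_refl1_eq) (simp add: beta_lattice_defs algebra_simps)
  then show ?case
    using ge2.IH(1) by simp
qed

lemma rsub_beta_1_beta_2_root_iff:
  "rsub (beta a b 1 j) (beta a b 2 k) \<in> roots a b \<longleftrightarrow> b = 1 \<and> j = 1 \<and> k = 0"
proof (induction k arbitrary: j rule: induct_nat_012)
  case 0
  have "rsub (beta a b 1 j) (beta a b 2 0) \<in> roots a b
      \<longleftrightarrow> radd (beta a b 2 0) (beta a b 2 (Suc j)) \<in> roots a b"
    by (rule roots_iff_if_refl1_eq) (simp add: beta_lattice_defs algebra_simps)
  then show ?case
    using radd_beta_2_0_beta_2_root_iff [of "Suc j"] by auto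
next
  case 1
  have "rsub (beta a b 1 j) (beta a b 2 (Suc 0)) \<in> roots a b
      \<longleftrightarrow> radd (beta a b 1 0) (beta a b 1 (Suc (Suc j))) \<in> roots a b"
    by (rule roots_iff_if_refl2_refl1_eq) (simp add: beta_lattice_defs algebra_simps)
  then show ?case
    using radd_beta_1_0_beta_1_not_root by simp
next
  case (ge2 k)
  have "rsub (beta a b 1 j) (beta a b 2 (Suc (Suc k))) \<in> roots a b
      \<longleftrightarrow> rsub (beta a b 1 (Suc (Suc j))) (beta a b 2 k) \<in> roots a b"
    by (rule roots_iff_if_refl2_refl1_eq) (simp add: beta_lattice_defs algebra_simps)
  then show ?case
    using ge2.IH(1) by simp
qed

lemma radd_beta_0_beta_root_iff:
  "i \<in> {1, 2} \<Longrightarrow> radd (beta a b i 0) (beta a b i k) \<in> roots a b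
    \<longleftrightarrow> b = 1 \<and> exceptional_pair i 0 k"
  using radd_beta_1_0_beta_1_not_root radd_beta_2_0_beta_2_root_iff
  by (auto simp: exceptional_pair_def)

lemma radd_beta_beta_root_iff:
  "i \<in> {1, 2} \<Longrightarrow> radd (beta a b i j) (beta a b i k) \<in> roots a b
    \<longleftrightarrow> b = 1 \<and> exceptional_pair i j k"
proof (induction j arbitrary: i k)
  case 0
  then show ?case
    by (rule radd_beta_0_beta_root_iff)
next
  case (Suc j)
  show ?case
  proof (cases "k = 0")
    case True
    then show ?thesis
      using radd_beta_0_beta_root_iff [OF Suc.prems, of "Suc j"]
      by (simp add: radd_commute [of "beta a b i 0"] exceptional_pair_def min.commute)
  next
    case False
    then obtain k' where "k = Suc k'"
      using not0_implies_Suc by blast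
    show ?thesis
    proof (cases "i = 1")
      case True
      have "radd (beta a b 1 (Suc j)) (beta a b 1 (Suc k')) \<in> roots a b
          \<longleftrightarrow> radd (beta a b 2 j) (beta a b 2 k') \<in> roots a b"
        by (rule roots_iff_if_refl2_eq) (simp add: beta_lattice_defs algebra_simps)
      then show ?thesis
        using Suc.IH [of 2 k'] True \<open>k = Suc k'\<close> by (auto simp: exceptional_pair_def)
    next
      case False
      then have "i = 2"
        using Suc.prems by simp
      have "radd (beta a b 2 (Suc j)) (beta a b 2 (Suc k')) \<in> roots a b
          \<longleftrightarrow> radd (beta a b 1 j) (beta a b 1 k') \<in> roots a b"
        by (rule roots_iff_if_refl1_eq) (simp add: beta_lattice_defs algebra_simps)
      then show ?thesis
        using Suc.IH [of 1 k'] \<open>i = 2\<close> \<open>k = Suc k'\<close> by (auto simp: exceptional_pair_def)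
    qed
  qed
qed

lemma rsub_beta_0_beta_root: "i \<in> {1, 2} \<Longrightarrow> 0 < k \<Longrightarrow> rsub (beta a b i 0) (beta a b i k) \<in> roots a b"
proof -
  assume "i \<in> {1, 2}" "0 < k"
  then obtain n where k: "k = Suc n"
    using gr0_implies_Suc by blast
  have "rsub (beta a b 1 0) (beta a b 1 (Suc n)) \<in> roots a b
      \<longleftrightarrow> rneg (radd (beta a b 1 0) (beta a b 2 n)) \<in> roots a b"
    by (rule roots_iff_if_refl2_eq) (simp add: beta_lattice_defs algebra_simps)
  moreover have "rsub (beta a b 2 0) (beta a b 2 (Suc n)) \<in> roots a b
      \<longleftrightarrow> rneg (radd (beta a b 1 n) (beta a b 2 0)) \<in> roots a b"
    by (rule roots_iff_if_refl1_eq) (simp add: beta_lattice_defs algebra_simps)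
  ultimately show ?thesis
    using \<open>i \<in> {1, 2}\<close> k radd_beta_1_beta_2_root by auto
qed

lemma rsub_beta_beta_root:
  "i \<in> {1, 2} \<Longrightarrow> j \<noteq> k \<Longrightarrow> rsub (beta a b i j) (beta a b i k) \<in> roots a b"
proof (induction j arbitrary: i k)
  case 0
  then show ?case
    by (simp add: rsub_beta_0_beta_root)
next
  case (Suc j)
  show ?case
  proof (cases "k = 0")
    case True
    then show ?thesis
      using rsub_beta_0_beta_root [OF Suc.prems(1), of "Suc j"]
      by (metis rneg_rsub roots_rneg_iff zero_less_Suc)
  next
    case False
    then obtain k' where "k = Suc k'"
      using not0_implies_Suc by blast
    show ?thesis
    proof (cases "i = 1")
      case True
      have "rsub (beta a b 1 (Suc j)) (beta a b 1 (Suc k')) \<in> roots a b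
          \<longleftrightarrow> rsub (beta a b 2 j) (beta a b 2 k') \<in> roots a b"
        by (rule roots_iff_if_refl2_eq) (simp add: beta_lattice_defs algebra_simps)
      then show ?thesis
        using Suc.IH [of 2 k'] Suc.prems True \<open>k = Suc k'\<close> by simp
    next
      case False
      then have "i = 2"
        using Suc.prems by simp
      have "rsub (beta a b 2 (Suc j)) (beta a b 2 (Suc k')) \<in> roots a b
          \<longleftrightarrow> rsub (beta a b 1 j) (beta a b 1 k') \<in> roots a b"
        by (rule roots_iff_if_refl1_eq) (simp add: beta_lattice_defs algebra_simps)
      then show ?thesis
        using Suc.IH [of 1 k'] Suc.prems \<open>i = 2\<close> \<open>k = Suc k'\<close> by simp
    qed
  qed
qed

section \<open>Classification of pi-systems\<close>

lemma rsub_signed_beta_root: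
  assumes "i \<in> {1, 2}" "l \<in> {1, 2}" "(e = f) \<longleftrightarrow> (i = l)"
    and "signed e (beta a b i j) \<noteq> signed f (beta a b l k)"
  shows "rsub (signed e (beta a b i j)) (signed f (beta a b l k)) \<in> roots a b"
proof (cases "e = f")
  case True
  then have "i = l" "j \<noteq> k"
    using assms(3,4) by auto
  then show ?thesis
    using True rsub_beta_beta_root assms(1) by (simp add: rsub_signed)
next
  case False
  then have "(i, l) = (1, 2) \<or> (i, l) = (2, 1)"
    using assms(1-3) by auto
  then have "radd (beta a b i j) (beta a b l k) \<in> roots a b"
    using radd_beta_1_beta_2_root [of j k] radd_beta_1_beta_2_root [of k j]
      radd_commute [of "beta a b 2 j" "beta a b 1 k"]
    by auto
  then show ?thesis
    using False by (simp add: rsub_signed)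
qed

lemma pi_system_eq_doubleton:
  assumes "pi_system a b S" "v \<in> S" "w \<in> S" "v \<noteq> w"
  shows "S = {v, w}"
    and "\<exists>e i j f l k. i \<in> {1, 2} \<and> l \<in> {1, 2} \<and> v = signed e (beta a b i j)
      \<and> w = signed f (beta a b l k) \<and> (e = f) \<noteq> (i = l)"
proof -
  have signed: "\<exists>e i j. i \<in> {1, 2} \<and> u = signed e (beta a b i j)" if "u \<in> S" for u
    using that assms(1) real_root_signed_beta [of u a b] by (auto simp: pi_system_def)
  have types: "(e = f) \<noteq> (i = l)"
    if "signed e (beta a b i j) \<in> S" "signed f (beta a b l k) \<in> S"
      "signed e (beta a b i j) \<noteq> signed f (beta a b l k)" "i \<in> {1, 2}" "l \<in> {1, 2}"
    for e i j f l k
    using that assms(1) rsub_signed_beta_root [of i l e f j k] unfolding pi_system_def by blast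
  obtain e i j where v: "i \<in> {1, 2}" "v = signed e (beta a b i j)"
    using signed assms(2) by blast
  obtain f l k where w: "l \<in> {1, 2}" "w = signed f (beta a b l k)"
    using signed assms(3) by blast
  show "\<exists>e i j f l k. i \<in> {1, 2} \<and> l \<in> {1, 2} \<and> v = signed e (beta a b i j)
      \<and> w = signed f (beta a b l k) \<and> (e = f) \<noteq> (i = l)"
    using v w types [of e i j f l k] assms(2-4) by blast
  (* no three sign/index pairs can pairwise differ in exactly one coordinate *)
  have "u \<in> {v, w}" if "u \<in> S" for u
  proof (rule ccontr)
    assume "u \<notin> {v, w}"
    moreover obtain g m n where "m \<in> {1, 2}" "u = signed g (beta a b m n)"
      using signed \<open>u \<in> S\<close> by blast
    ultimately show False
      using types [of e i j f l k] types [of g m n e i j] types [of g m n f l k]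
        v w \<open>u \<in> S\<close> assms(2-4) by auto
  qed
  then show "S = {v, w}"
    using assms(2,3) by blast
qed

lemma pi_system_classification:
  assumes "pi_system a b S" "\<exists>v\<in>S. \<exists>w\<in>S. v \<noteq> w"
  shows "(\<exists>j k. S = {beta a b 1 j, beta a b 2 k} \<and> pi_system a b {beta a b 1 j, beta a b 2 k})
    \<or> (\<exists>j k. S = {rneg (beta a b 1 j), rneg (beta a b 2 k)}
        \<and> pi_system a b {beta a b 1 j, beta a b 2 k})
    \<or> (\<exists>i\<in>{1, 2}. \<exists>j k. S = {beta a b i j, rneg (beta a b i k)})"
proof -
  obtain v w where "v \<in> S" "w \<in> S" "v \<noteq> w"
    using assms(2) by blast
  then obtain e i j f l k where S: "S = {v, w}" and
    types: "i \<in> {1, 2}" "l \<in> {1, 2}" "v = signed e (beta a b i j)" "w = signed f (beta a b l k)"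
      "(e = f) \<noteq> (i = l)"
    using pi_system_eq_doubleton [OF assms(1)] by metis
  show ?thesis
  proof (cases "e = f")
    case True
    then obtain j' k' where S': "S = signed e ` {beta a b 1 j', beta a b 2 k'}"
      using S types by (auto simp: insert_commute)
    then have "pi_system a b {beta a b 1 j', beta a b 2 k'}"
      using assms(1) pi_system_signed_image_iff by metis
    then show ?thesis
      using S' by (cases e) (auto simp: signed_def)
  next
    case False
    then show ?thesis
      using S types by (cases e) (auto simp: signed_def insert_commute)
  qed
qed

lemma pi_system_beta_1_beta_2_iff:
  "pi_system a b {beta a b 1 j, beta a b 2 k} \<longleftrightarrow> \<not> (b = 1 \<and> j = 1 \<and> k = 0)"
  using zero_not_in_roots a_gt_0 b_ge_1 beta_real_root rsub_beta_1_beta_2_root_iff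
  by (simp add: pi_system_pair_iff)

lemma pi_system_beta_rneg_beta_iff:
  "i \<in> {1, 2} \<Longrightarrow> pi_system a b {beta a b i j, rneg (beta a b i k)}
    \<longleftrightarrow> \<not> (b = 1 \<and> exceptional_pair i j k)"
  using zero_not_in_roots a_gt_0 b_ge_1 beta_real_root radd_beta_beta_root_iff
  by (simp add: pi_system_pair_iff)

lemma pi_system_card_le_2:
  assumes "pi_system a b S"
  shows "finite S \<and> card S \<le> 2 \<and> (lin_indep S \<or> (\<exists>v\<in>positive_real_roots a b. S = {v, rneg v}))"
proof (cases "\<exists>v\<in>S. \<exists>w\<in>S. v \<noteq> w")
  case True
  then obtain v w where vw: "v \<in> S" "w \<in> S" "v \<noteq> w"
    by blast
  then have S: "S = {v, w}"
    by (rule pi_system_eq_doubleton(1) [OF assms])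
  have real: "v \<in> real_roots a b" "w \<in> real_roots a b"
    using assms vw by (auto simp: pi_system_def)
  have "finite S" "card S \<le> 2"
    using S by (simp_all add: card_insert_if)
  moreover have "lin_indep S \<or> (\<exists>u\<in>positive_real_roots a b. S = {u, rneg u})"
  proof (cases "w = rneg v")
    case True
    obtain e i j where "i \<in> {1, 2}" "v = signed e (beta a b i j)"
      using real_root_signed_beta real(1) by blast
    then have "v \<in> positive_real_roots a b \<or> w \<in> positive_real_roots a b"
      using True beta_nonneg [of i j] beta_real_root
      by (cases e) (auto simp: positive_real_roots_def signed_def)
    then show ?thesis
      using S True by (metis insert_commute rneg_rneg)
  next
    case False
    then show ?thesis
      using S vw lin_indep_real_root_pair [OF real] by simp
  qed
  ultimately show ?thesis
    by blast
next
  case False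
  then consider "S = {}" | v where "S = {v}"
    by blast
  then show ?thesis
  proof cases
    case 1
    then show ?thesis
      by (simp add: lin_indep_def independent_empty)
  next
    case 2
    then have "v \<noteq> (0, 0)"
      using assms zero_not_in_roots a_gt_0 b_ge_1 by (auto simp: pi_system_def roots_def)
    then show ?thesis
      using 2 lin_indep_singleton by simp
  qed
qed

end

theorem theorem4p1:
  fixes a b :: int
  assumes "b \<le> a" and "1 \<le> b" and "b \<ge> 2 \<or> (b = 1 \<and> a \<ge> 5)"
  shows
    "(\<forall>S. pi_system a b S \<and> (\<exists>v\<in>S. \<exists>w\<in>S. v \<noteq> w) \<longrightarrow>
        (\<exists>j k. S = {beta a b 1 j, beta a b 2 k} \<and> pi_system a b {beta a b 1 j, beta a b 2 k})
      \<or> (\<exists>j k. S = {rneg (beta a b 1 j), rneg (beta a b 2 k)}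
               \<and> pi_system a b {beta a b 1 j, beta a b 2 k})
      \<or> (\<exists>i\<in>{1,2}. \<exists>j k. S = {beta a b i j, rneg (beta a b i k)}))
   \<and> (b = 1 \<longrightarrow> (\<forall>j k. pi_system a b {beta a b 1 j, beta a b 2 k} \<longleftrightarrow> (j, k) \<noteq> (1, 0)))
   \<and> (\<forall>S. pi_system a b S \<longrightarrow>
        finite S \<and> card S \<le> 2 \<and>
        (lin_indep S \<or> (\<exists>v\<in>positive_real_roots a b. S = {v, rneg v})))
   \<and> (b \<ge> 2 \<longrightarrow> (\<forall>i\<in>{1,2}. \<forall>j k. pi_system a b {beta a b i j, rneg (beta a b i k)}))
   \<and> (b = 1 \<longrightarrow> (\<forall>i\<in>{1,2}. \<forall>j k. pi_system a b {beta a b i j, rneg (beta a b i k)} \<longleftrightarrow>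
        \<not> (\<exists>s. {j, k} = {s, s + 2} \<and> s mod 2 = i mod 2)))"
proof -
  interpret rank2_km a b
    using assms by unfold_locales auto
  show ?thesis
    using pi_system_classification pi_system_card_le_2 pi_system_beta_1_beta_2_iff
      pi_system_beta_rneg_beta_iff exceptional_pair_iff
    by auto
qed

end
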